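(* Let $\varepsilon\in[0,1)$ and $M>1$. Let $\mathcal{P},\mathcal{E}\subseteq\mathcal{D}(P)$ satisfy $\operatorname{conv}(\mathcal{P})\cap\operatorname{aff}(\mathcal{E})\neq\emptyset$. Then there exists a linear map $\mathcal{L}$ from operators on $P$ to operators on the qubit $B$ such that $T(\mathcal{L}(\rho),|1\rangle\langle1|)\le\varepsilon$ for all $\rho\in\mathcal{P}$ and $\mathcal{L}(\tau)=\pi_M$ for all $\tau\in\mathcal{E}$ if and only if $\varepsilon\ge 1-1/M$. Moreover, whenever the transformation is achievable, the optimal work extraction is realized by the thermal operation $\mathcal{L}(\cdot)=\operatorname{tr}[\cdot]\,\pi_{1/(1-\varepsilon)}$.
   Context: All Hilbert spaces are finite-dimensional; $\mathcal{D}(P)$ is the set of density operators on $P$; $T(X,Y)=\tfrac12\|X-Y\|_1$. $\operatorname{conv}$ and $\operatorname{aff}$ denote convex and affine hulls. The battery is a qubit $B$ with orthonormal basis $\{|0\rangle,|1\rangle\}$; for $M>1$ its Gibbs state is $\pi_M=(1-\tfrac1M)|0\rangle\langle0|+\tfrac1M|1\rangle\langle1|$, and the excited clean battery is $(|1\rangle\langle1|,\pi_M)$; larger $M$ means more work stored ($\beta\times$work $=\log M$). The conversion described in the claim is the uncertain athermal state conversion $(\mathcal{P},\mathcal{E})\xrightarrow{\mathcal{L},\varepsilon}(|1\rangle\langle1|,\pi_M)$ under Gibbs-preserving linear maps (GPL). A thermal operation is a map of the form $\rho\mapsto\operatorname{tr}_{\text{rest}}[U(\rho\otimes\tau^E)U^\dagger]$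 with $\tau^E$ the Gibbs state of an ancilla and $U$ an energy-conserving unitary. *)

theory Defs
  imports "HOL-Analysis.Analysis"
begin

text \<open>Operators on a finite-dimensional Hilbert space whose orthonormal basis is
  indexed by the finite type 'n are represented as complex matrices of type
  complex^'n^'n (row index first).  The qubit battery B is indexed by type 2.\<close>

type_synonym ('n) op = "complex^'n^'n"

definition adj :: "complex^('n::finite)^('m::finite) \<Rightarrow> complex^'m^'n" where
  "adj A = (\<chi> i j. cnj (A$j$i))"

definition hermitian :: "('n::finite) op \<Rightarrow> bool" where
  "hermitian A \<longleftrightarrow> adj A = A"

definition psd :: "('n::finite) op \<Rightarrow> bool" where
  "psd A \<longleftrightarrow> hermitian A \<and>
     (\<forall>v::complex^'n. 0 \<le> Re (\<Sum>i\<in>UNIV. \<Sum>j\<in>UNIV. cnj (v$i) * A$i$j * v$j))"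

definition density :: "('n::finite) op set" where
  "density = {\<rho>. psd \<rho> \<and> trace \<rho> = 1}"

definition abs_op :: "('n::finite) op \<Rightarrow> 'n op" where
  "abs_op A = (THE S. psd S \<and> S ** S = adj A ** A)"

definition trace_norm :: "('n::finite) op \<Rightarrow> real" where
  "trace_norm A = Re (trace (abs_op A))"

definition trace_dist :: "('n::finite) op \<Rightarrow> 'n op \<Rightarrow> real" where
  "trace_dist X Y = trace_norm (X - Y) / 2"

definition cscale :: "complex \<Rightarrow> complex^('n::finite)^('m::finite) \<Rightarrow> complex^'n^'m" where
  "cscale c X = (\<chi> i j. c * X$i$j)"

definition clinear_op :: "(('n::finite) op \<Rightarrow> ('b::finite) op) \<Rightarrow> bool" where
  "clinear_op L \<longleftrightarrow> (\<forall>X Y. L (X + Y) = L X + L Y) \<and> (\<forall>c X. L (cscale c X) = cscale c (L X))"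

definition ket1bra1 :: "2 op" where
  "ket1bra1 = (\<chi> i j. if i = 1 \<and> j = 1 then 1 else 0)"

definition gibbs_battery :: "real \<Rightarrow> 2 op" where
  "gibbs_battery M = (\<chi> i j. if i = j then (if i = 0 then complex_of_real (1 - 1 / M)
                                              else complex_of_real (1 / M)) else 0)"

definition converts :: "('n::finite) op set \<Rightarrow> 'n op set \<Rightarrow> real \<Rightarrow> real \<Rightarrow> ('n op \<Rightarrow> 2 op) \<Rightarrow> bool" where
  "converts P E eps M L \<longleftrightarrow> clinear_op L \<and>
     (\<forall>\<rho>\<in>P. trace_dist (L \<rho>) ket1bra1 \<le> eps) \<and> (\<forall>\<tau>\<in>E. L \<tau> = gibbs_battery M)"

definition diag_op :: "complex^('n::finite) \<Rightarrow> 'n op" where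
  "diag_op v = (\<chi> i j. if i = j then v$i else 0)"

definition unitary_mat :: "complex^('n::finite)^('m::finite) \<Rightarrow> bool" where
  "unitary_mat U \<longleftrightarrow> U ** adj U = mat 1 \<and> adj U ** U = mat 1"

text \<open>G is the Gibbs state exp(-beta H)/tr exp(-beta H) of the Hamiltonian H
  (matrix exponential via the spectral decomposition of the Hermitian H).\<close>
definition is_gibbs :: "real \<Rightarrow> ('n::finite) op \<Rightarrow> 'n op \<Rightarrow> bool" where
  "is_gibbs beta H G \<longleftrightarrow> hermitian H \<and>
     (\<exists>(V::'n op) (e::real^'n). unitary_mat V \<and>
        H = V ** diag_op (\<chi> i. complex_of_real (e$i)) ** adj V \<and>
        G = V ** diag_op (\<chi> i. complex_of_real (exp (- beta * e$i) / (\<Sum>k\<in>UNIV. exp (- beta * e$k)))) ** adj V)"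

definition kron :: "complex^('a::finite)^('b::finite) \<Rightarrow> complex^('c::finite)^('d::finite) \<Rightarrow> complex^('a \<times> 'c)^('b \<times> 'd)" where
  "kron A B = (\<chi> p q. A$fst p$fst q * B$snd p$snd q)"

definition ptrace2 :: "complex^(('b::finite) \<times> ('r::finite))^('b \<times> 'r) \<Rightarrow> 'b op" where
  "ptrace2 X = (\<chi> b b'. \<Sum>r\<in>UNIV. X$(b,r)$(b',r))"

text \<open>Lambda is a thermal operation at inverse temperature beta from the system with
  Hamiltonian HS (space indexed by 'n) to the system with Hamiltonian HB (indexed by 'b),
  using an ancilla indexed by 'e, the discarded rest being indexed by 'r:
  Lambda(X) = tr_rest[U (X (x) tau^E) U^dagger], tau^E the Gibbs state of the ancilla
  Hamiltonian HE, and U an energy-conserving unitary from S(x)E onto B(x)R, i.e.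
  U (HS (x) 1 + 1 (x) HE) = (HB (x) 1 + 1 (x) HR) U.\<close>
definition thermal_operation ::
  "('e::finite) itself \<Rightarrow> ('r::finite) itself \<Rightarrow> real \<Rightarrow> ('n::finite) op \<Rightarrow> ('b::finite) op \<Rightarrow> ('n op \<Rightarrow> 'b op) \<Rightarrow> bool" where
  "thermal_operation _ _ beta HS HB Lam \<longleftrightarrow>
     (\<exists>(HE::'e op) (HR::'r op) (tauE::'e op) (U::complex^('n \<times> 'e)^('b \<times> 'r)).
        hermitian HS \<and> hermitian HB \<and> hermitian HE \<and> hermitian HR \<and>
        is_gibbs beta HE tauE \<and> unitary_mat U \<and>
        U ** (kron HS (mat 1) + kron (mat 1) HE) = (kron HB (mat 1) + kron (mat 1) HR) ** U \<and>
        (\<forall>X. Lam X = ptrace2 (U ** kron X tauE ** adj U)))"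

end

theory Submission
  imports Defs
begin

(* The population difference f Y = Re Y00 - Re Y11 of a qubit operator is real linear, is at
   most 2 eps - 1 on every state within trace distance eps of |1><1| (because
   Re Y00 - Re Y11 <= ||Y||_1), and equals 1 - 2/M on pi_M.  For a linear L the functional
   f o L is linear, so evaluating it at a point of conv P /\ aff E gives 1 - 2/M <= 2 eps - 1,
   i.e. eps >= 1 - 1/M.  Conversely the replacement map X |-> tr X pi_M is linear, sends E to
   pi_M and every state to distance exactly 1 - 1/M from |1><1|, and is a thermal operation:
   swap the system with an ancilla prepared in pi_M.  The trace norm of a qubit operator is
   computed from the explicit psd square root of a 2x2 matrix,
   ||Y||_1^2 = sum |Y_ij|^2 + 2 |det Y|. *)

lemma UNIV_2_eq_0_1: "(UNIV :: 2 set) = {0, 1}"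
proof -
  have "(2 :: 2) = 0" by simp
  with UNIV_2 show ?thesis by auto
qed

lemma forall_2_0_1: "(\<forall>i :: 2. P i) \<longleftrightarrow> P 0 \<and> P 1"
  by (metis UNIV_2_eq_0_1 UNIV_I insertE singletonD)

lemma sum_UNIV_2: "sum f (UNIV :: 2 set) = f 0 + f 1"
  by (simp add: UNIV_2_eq_0_1)

lemma mat2_eqI:
  fixes A B :: "'a^2^2"
  assumes "A$0$0 = B$0$0" "A$0$1 = B$0$1" "A$1$0 = B$1$0" "A$1$1 = B$1$1"
  shows "A = B"
  using assms by (simp add: vec_eq_iff forall_2_0_1)

lemma det_2_0_1: "det (A :: 'a::comm_ring_1^2^2) = A$0$0 * A$1$1 - A$0$1 * A$1$0"
proof -
  have "(2 :: 2) = 0" by simp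
  with det_2[of A] show ?thesis by (simp add: algebra_simps)
qed

definition herm2 :: "real \<Rightarrow> complex \<Rightarrow> real \<Rightarrow> 2 op" where
  "herm2 p q r = (\<chi> i j. if i = 0 then (if j = 0 then of_real p else q)
                                 else (if j = 0 then cnj q else of_real r))"

lemma herm2_nth [simp]:
  "herm2 p q r $0$0 = of_real p" "herm2 p q r $0$1 = q"
  "herm2 p q r $1$0 = cnj q" "herm2 p q r $1$1 = of_real r"
  by (simp_all add: herm2_def)

lemma herm2_eq_iff: "herm2 p q r = herm2 p' q' r' \<longleftrightarrow> p = p' \<and> q = q' \<and> r = r'"
proof
  assume "herm2 p q r = herm2 p' q' r'"
  then have "herm2 p q r $0$0 = herm2 p' q' r' $0$0" "herm2 p q r $0$1 = herm2 p' q' r' $0$1"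
    "herm2 p q r $1$1 = herm2 p' q' r' $1$1"
    by simp_all
  then show "p = p' \<and> q = q' \<and> r = r'" by simp
qed simp

lemma hermitian_herm2: "hermitian (herm2 p q r)"
  unfolding hermitian_def adj_def by (rule mat2_eqI) simp_all

lemma hermitian_eq_herm2:
  assumes "hermitian S"
  shows "S = herm2 (Re (S$0$0)) (S$0$1) (Re (S$1$1))"
proof -
  have entry: "cnj (S$j$i) = S$i$j" for i j
    using arg_cong[OF assms[unfolded hermitian_def], of "\<lambda>A. A$i$j"] by (simp add: adj_def)
  have real_diag: "of_real (Re (S$i$i)) = S$i$i" for i
    using entry[of i i] by (simp add: complex_eq_iff)
  show ?thesis
    by (rule mat2_eqI) (simp_all add: real_diag entry)
qed

lemma quadratic_form_herm2:
  "Re (\<Sum>i\<in>UNIV. \<Sum>j\<in>UNIV. cnj (v$i) * herm2 p q r$i$j * v$j)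
   = p * (cmod (v$0))\<^sup>2 + r * (cmod (v$1))\<^sup>2 + 2 * Re (cnj (v$0) * q * v$1)"
proof -
  have cross: "Re (cnj x * c * y) + Re (cnj y * cnj c * x) = 2 * Re (cnj x * c * y)" for x y c :: complex
  proof -
    have "cnj y * cnj c * x = cnj (cnj x * c * y)"
      by (simp add: mult_ac)
    then show ?thesis by (simp only: cnj.sel(1))
  qed
  have diag: "Re (cnj x * of_real c * x) = c * (cmod x)\<^sup>2" for x :: complex and c
  proof -
    have "cnj x * of_real c * x = of_real (c * (cmod x)\<^sup>2)"
      by (simp only: of_real_mult complex_norm_square mult_ac)
    then show ?thesis by (simp only: Re_complex_of_real)
  qed
  have expand: "(\<Sum>i\<in>UNIV. \<Sum>j\<in>UNIV. cnj (v$i) * herm2 p q r$i$j * v$j)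
      = cnj (v$0) * of_real p * v$0 + cnj (v$1) * of_real r * v$1
        + (cnj (v$0) * q * v$1 + cnj (v$1) * cnj q * v$0)"
    by (simp add: sum_UNIV_2 add_ac)
  show ?thesis
    by (simp only: expand plus_complex.sel cross diag)
qed

lemma psd_herm2D:
  assumes "psd (herm2 p q r)"
  shows "0 \<le> p \<and> 0 \<le> r \<and> (cmod q)\<^sup>2 \<le> p * r"
proof -
  define n where "n = (cmod q)\<^sup>2"
  have form: "0 \<le> p * (cmod (v$0))\<^sup>2 + r * (cmod (v$1))\<^sup>2 + 2 * Re (cnj (v$0) * q * v$1)"
    for v :: "complex^2"
    using assms unfolding psd_def quadratic_form_herm2 by blast
  have Q: "0 \<le> p * (cmod x)\<^sup>2 + r * (cmod y)\<^sup>2 + 2 * Re (cnj x * q * y)" for x y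
    using form[of "\<chi> i. if i = 0 then x else y"] by simp
  have p: "0 \<le> p" and r: "0 \<le> r"
    using Q[of 1 0] Q[of 0 1] by simp_all
  have line: "0 \<le> p * n * a\<^sup>2 + r - 2 * n * a" for a :: real
  proof -
    have "cnj (q * of_real a) * q * -1 = of_real (- n * a)"
      by (simp add: n_def mult_ac flip: complex_norm_square)
    then have "Re (cnj (q * of_real a) * q * -1) = - n * a"
      by (simp only: Re_complex_of_real)
    then show ?thesis
      using Q[of "q * of_real a" "-1"] by (simp add: n_def norm_mult power_mult_distrib)
  qed
  have "n \<le> p * r"
  proof (cases "p = 0")
    case True
    have "n = 0"
    proof (rule ccontr)
      assume "n \<noteq> 0"
      then have "r - 2 * n * ((r + 1) / (2 * n)) = -1" by simp
      then show False using line[of "(r + 1) / (2 * n)"] True by simp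
    qed
    then show ?thesis using p r by simp
  next
    case False
    with p have "0 < p" by simp
    have "p * n * (1 / p)\<^sup>2 + r - 2 * n * (1 / p) = r - n / p"
      using False by (simp add: field_simps power2_eq_square)
    with line[of "1 / p"] have "n / p \<le> r" by simp
    with \<open>0 < p\<close> show ?thesis by (simp add: field_simps mult.commute)
  qed
  with p r show ?thesis by (simp add: n_def)
qed

lemma psd_herm2I:
  assumes "0 \<le> p" and "0 \<le> r" and "(cmod q)\<^sup>2 \<le> p * r"
  shows "psd (herm2 p q r)"
  unfolding psd_def quadratic_form_herm2
proof (intro conjI hermitian_herm2 allI)
  fix v :: "complex^2"
  define a b n where "a = cmod (v$0)" and "b = cmod (v$1)" and "n = cmod q"
  have "- (a * n * b) \<le> Re (cnj (v$0) * q * v$1)"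
    using abs_Re_le_cmod[of "cnj (v$0) * q * v$1"] by (simp add: norm_mult a_def b_def n_def)
  moreover have "2 * (a * n * b) \<le> p * a\<^sup>2 + r * b\<^sup>2"
  proof (cases "p = 0")
    case True
    with assms have "n = 0" by (simp add: n_def)
    with assms True show ?thesis by simp
  next
    case False
    with assms have "0 < p" by simp
    have "0 \<le> (p * a - n * b)\<^sup>2 + (p * r - n\<^sup>2) * b\<^sup>2"
      using assms by (simp add: n_def)
    also have "\<dots> = p * (p * a\<^sup>2 + r * b\<^sup>2 - 2 * (a * n * b))"
      by (simp add: algebra_simps power2_eq_square)
    finally show ?thesis using \<open>0 < p\<close> by (simp add: zero_le_mult_iff)
  qed
  ultimately show "0 \<le> p * (cmod (v$0))\<^sup>2 + r * (cmod (v$1))\<^sup>2 + 2 * Re (cnj (v$0) * q * v$1)"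
    by (simp add: a_def b_def)
qed

lemma psd_herm2_iff: "psd (herm2 p q r) \<longleftrightarrow> 0 \<le> p \<and> 0 \<le> r \<and> (cmod q)\<^sup>2 \<le> p * r"
  using psd_herm2D psd_herm2I by blast

lemma herm2_square:
  "herm2 p q r ** herm2 p q r = herm2 (p\<^sup>2 + (cmod q)\<^sup>2) (q * of_real (p + r)) (r\<^sup>2 + (cmod q)\<^sup>2)"
proof -
  have norm_q: "q * cnj q = of_real ((cmod q)\<^sup>2)" "cnj q * q = of_real ((cmod q)\<^sup>2)"
    by (simp_all only: complex_norm_square mult.commute)
  show ?thesis
    by (rule mat2_eqI)
      (simp_all add: matrix_matrix_mult_def sum_UNIV_2 norm_q power2_eq_square
        distrib_left distrib_right mult.commute)
qed

(* For psd S with S\<^sup>2 = A, Cayley-Hamilton gives A + sqrt (det A) I = (tr S) S and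
   (tr S)\<^sup>2 = tr A + 2 sqrt (det A). *)
definition herm2_sqrt :: "real \<Rightarrow> complex \<Rightarrow> real \<Rightarrow> 2 op" where
  "herm2_sqrt \<alpha> \<beta> \<delta> =
     (let s = sqrt (\<alpha> * \<delta> - (cmod \<beta>)\<^sup>2); t = sqrt (\<alpha> + \<delta> + 2 * s)
      in herm2 ((\<alpha> + s) / t) (\<beta> / of_real t) ((\<delta> + s) / t))"

lemma herm2_sqrt_unique:
  assumes "psd S" and "S ** S = herm2 \<alpha> \<beta> \<delta>"
  shows "S = herm2_sqrt \<alpha> \<beta> \<delta>"
proof -
  define p q r where "p = Re (S$0$0)" and "q = S$0$1" and "r = Re (S$1$1)"
  have S: "S = herm2 p q r"
    using assms(1) hermitian_eq_herm2 unfolding psd_def p_def q_def r_def by blast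
  have psd: "0 \<le> p" "0 \<le> r" "(cmod q)\<^sup>2 \<le> p * r"
    using assms(1) psd_herm2_iff unfolding S by auto
  have \<alpha>: "\<alpha> = p\<^sup>2 + (cmod q)\<^sup>2" and \<beta>: "\<beta> = q * of_real (p + r)"
    and \<delta>: "\<delta> = r\<^sup>2 + (cmod q)\<^sup>2"
    using assms(2) unfolding S herm2_square herm2_eq_iff by auto
  have "cmod \<beta> = cmod q * (p + r)"
    using psd unfolding \<beta> by (simp add: norm_mult del: of_real_add)
  then have "\<alpha> * \<delta> - (cmod \<beta>)\<^sup>2 = (p * r - (cmod q)\<^sup>2)\<^sup>2"
    unfolding \<alpha> \<delta> by (simp add: algebra_simps power2_eq_square)
  then have s: "sqrt (\<alpha> * \<delta> - (cmod \<beta>)\<^sup>2) = p * r - (cmod q)\<^sup>2"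
    using psd by simp
  have "\<alpha> + \<delta> + 2 * (p * r - (cmod q)\<^sup>2) = (p + r)\<^sup>2"
    unfolding \<alpha> \<delta> by (simp add: algebra_simps power2_eq_square)
  then have t: "sqrt (\<alpha> + \<delta> + 2 * (p * r - (cmod q)\<^sup>2)) = p + r"
    using psd by simp
  show ?thesis
  proof (cases "p + r = 0")
    case True
    with psd have "p = 0" "r = 0" by auto
    moreover from this psd have "q = 0" by simp
    ultimately show ?thesis
      unfolding S herm2_sqrt_def Let_def s t by simp
  next
    case False
    have "(\<alpha> + (p * r - (cmod q)\<^sup>2)) / (p + r) = p"
      and "(\<delta> + (p * r - (cmod q)\<^sup>2)) / (p + r) = r"
      using False unfolding \<alpha> \<delta> by (simp_all add: field_simps power2_eq_square)
    moreover have "\<beta> / of_real (p + r) = q"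
      using False unfolding \<beta> by (simp del: of_real_add)
    ultimately show ?thesis
      unfolding S herm2_sqrt_def Let_def s t by simp
  qed
qed

lemma trace_herm2: "trace (herm2 p q r) = of_real (p + r)"
  by (simp add: trace_def sum_UNIV_2)

lemma trace_herm2_sqrt:
  assumes "0 \<le> \<alpha>" and "0 \<le> \<delta>" and "(cmod \<beta>)\<^sup>2 \<le> \<alpha> * \<delta>"
  shows "trace (herm2_sqrt \<alpha> \<beta> \<delta>)
           = of_real (sqrt (\<alpha> + \<delta> + 2 * sqrt (\<alpha> * \<delta> - (cmod \<beta>)\<^sup>2)))"
proof -
  define s where "s = sqrt (\<alpha> * \<delta> - (cmod \<beta>)\<^sup>2)"
  define t where "t = sqrt (\<alpha> + \<delta> + 2 * s)"
  have "0 \<le> s"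
    using assms(3) by (simp add: s_def)
  with assms have t2: "t\<^sup>2 = \<alpha> + \<delta> + 2 * s"
    by (simp add: t_def)
  have "(\<alpha> + s) / t + (\<delta> + s) / t = t\<^sup>2 / t"
    unfolding t2 by (simp add: field_simps flip: add_divide_distrib)
  also have "\<dots> = t"
    by (simp add: power2_eq_square)
  finally show ?thesis
    unfolding herm2_sqrt_def Let_def trace_herm2 s_def t_def by simp
qed

lemma psd_herm2_sqrt:
  assumes "0 \<le> \<alpha>" and "0 \<le> \<delta>" and "(cmod \<beta>)\<^sup>2 \<le> \<alpha> * \<delta>"
  shows "psd (herm2_sqrt \<alpha> \<beta> \<delta>)"
proof -
  define s where "s = sqrt (\<alpha> * \<delta> - (cmod \<beta>)\<^sup>2)"
  define t where "t = sqrt (\<alpha> + \<delta> + 2 * s)"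
  have "0 \<le> s"
    using assms(3) by (simp add: s_def)
  with assms have "0 \<le> t"
    by (simp add: t_def)
  have "(cmod \<beta>)\<^sup>2 \<le> (\<alpha> + s) * (\<delta> + s)"
    using assms \<open>0 \<le> s\<close> by (simp add: algebra_simps add_increasing2)
  then have "(cmod (\<beta> / of_real t))\<^sup>2 \<le> (\<alpha> + s) / t * ((\<delta> + s) / t)"
    by (simp add: norm_divide power_divide divide_right_mono flip: power2_eq_square)
  moreover have "0 \<le> (\<alpha> + s) / t" "0 \<le> (\<delta> + s) / t"
    using assms \<open>0 \<le> s\<close> \<open>0 \<le> t\<close> by simp_all
  ultimately show ?thesis
    unfolding herm2_sqrt_def Let_def s_def t_def by (intro psd_herm2I)
qed

lemma herm2_sqrt_square:
  assumes "0 \<le> \<alpha>" and "0 \<le> \<delta>" and "(cmod \<beta>)\<^sup>2 \<le> \<alpha> * \<delta>"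
  shows "herm2_sqrt \<alpha> \<beta> \<delta> ** herm2_sqrt \<alpha> \<beta> \<delta> = herm2 \<alpha> \<beta> \<delta>"
proof -
  define s where "s = sqrt (\<alpha> * \<delta> - (cmod \<beta>)\<^sup>2)"
  define t where "t = sqrt (\<alpha> + \<delta> + 2 * s)"
  have S: "herm2_sqrt \<alpha> \<beta> \<delta> = herm2 ((\<alpha> + s) / t) (\<beta> / of_real t) ((\<delta> + s) / t)"
    unfolding herm2_sqrt_def s_def t_def Let_def ..
  have "0 \<le> s" and s2: "s\<^sup>2 = \<alpha> * \<delta> - (cmod \<beta>)\<^sup>2"
    using assms(3) by (simp_all add: s_def)
  with assms have t2: "t\<^sup>2 = \<alpha> + \<delta> + 2 * s"
    by (simp add: t_def)
  show ?thesis
  proof (cases "t = 0")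
    case True
    with t2 assms \<open>0 \<le> s\<close> have "\<alpha> = 0" "\<delta> = 0" by auto
    moreover from this assms(3) have "\<beta> = 0" by simp
    ultimately show ?thesis
      unfolding S using True by (simp add: herm2_square)
  next
    case False
    have "(\<alpha> + s)\<^sup>2 + (cmod \<beta>)\<^sup>2 = \<alpha> * t\<^sup>2"
      and "(\<delta> + s)\<^sup>2 + (cmod \<beta>)\<^sup>2 = \<delta> * t\<^sup>2"
      unfolding t2 using s2 by (simp_all add: algebra_simps power2_eq_square)
    with False have "((\<alpha> + s) / t)\<^sup>2 + (cmod (\<beta> / of_real t))\<^sup>2 = \<alpha>"
      and "((\<delta> + s) / t)\<^sup>2 + (cmod (\<beta> / of_real t))\<^sup>2 = \<delta>"
      by (simp_all add: norm_divide power_divide field_simps)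
    moreover have "of_real ((\<alpha> + s) / t + (\<delta> + s) / t) = (of_real t :: complex)"
      using trace_herm2_sqrt[OF assms] unfolding S trace_herm2 s_def t_def .
    with False have "\<beta> / of_real t * of_real ((\<alpha> + s) / t + (\<delta> + s) / t) = \<beta>"
      by (simp del: of_real_add of_real_divide)
    ultimately show ?thesis
      unfolding S herm2_square herm2_eq_iff by blast
  qed
qed

lemma abs_op_eq_herm2_sqrt:
  assumes "adj Y ** Y = herm2 \<alpha> \<beta> \<delta>"
    and "0 \<le> \<alpha>" and "0 \<le> \<delta>" and "(cmod \<beta>)\<^sup>2 \<le> \<alpha> * \<delta>"
  shows "abs_op Y = herm2_sqrt \<alpha> \<beta> \<delta>"
  unfolding abs_op_def assms(1)
proof (rule the_equality)
  show "psd (herm2_sqrt \<alpha> \<beta> \<delta>)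
        \<and> herm2_sqrt \<alpha> \<beta> \<delta> ** herm2_sqrt \<alpha> \<beta> \<delta> = herm2 \<alpha> \<beta> \<delta>"
    using psd_herm2_sqrt[OF assms(2-4)] herm2_sqrt_square[OF assms(2-4)] ..
qed (use herm2_sqrt_unique in blast)

lemma trace_norm_qubit:
  fixes Y :: "2 op"
  shows "trace_norm Y = sqrt ((\<Sum>i\<in>UNIV. \<Sum>j\<in>UNIV. (cmod (Y$i$j))\<^sup>2) + 2 * cmod (det Y))"
proof -
  define \<alpha> \<beta> \<delta> where "\<alpha> = (cmod (Y$0$0))\<^sup>2 + (cmod (Y$1$0))\<^sup>2"
    and "\<beta> = cnj (Y$0$0) * Y$0$1 + cnj (Y$1$0) * Y$1$1"
    and "\<delta> = (cmod (Y$0$1))\<^sup>2 + (cmod (Y$1$1))\<^sup>2"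
  have norm_sq: "cnj z * z = of_real ((cmod z)\<^sup>2)" for z
    by (simp only: complex_norm_square mult.commute)
  have gram: "adj Y ** Y = herm2 \<alpha> \<beta> \<delta>"
    unfolding \<alpha>_def \<beta>_def \<delta>_def
    by (rule mat2_eqI) (simp_all add: matrix_matrix_mult_def adj_def sum_UNIV_2 norm_sq)
  have "complex_of_real (\<alpha> * \<delta>) = of_real ((cmod \<beta>)\<^sup>2 + (cmod (det Y))\<^sup>2)"
    unfolding \<alpha>_def \<beta>_def \<delta>_def det_2_0_1 of_real_mult of_real_add complex_norm_square
    by (simp add: algebra_simps)
  then have lagrange: "\<alpha> * \<delta> = (cmod \<beta>)\<^sup>2 + (cmod (det Y))\<^sup>2"
    by (simp only: of_real_eq_iff)
  have psd: "0 \<le> \<alpha>" "0 \<le> \<delta>" "(cmod \<beta>)\<^sup>2 \<le> \<alpha> * \<delta>"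
    unfolding lagrange by (simp_all add: \<alpha>_def \<delta>_def)
  have "trace_norm Y = sqrt (\<alpha> + \<delta> + 2 * cmod (det Y))"
    unfolding trace_norm_def abs_op_eq_herm2_sqrt[OF gram psd] trace_herm2_sqrt[OF psd] lagrange
    by simp
  then show ?thesis
    by (simp add: sum_UNIV_2 \<alpha>_def \<delta>_def)
qed

lemma trace_norm_ge_diag_diff:
  fixes Y :: "2 op"
  shows "Re (Y$0$0) - Re (Y$1$1) \<le> trace_norm Y"
proof -
  define a b c d where "a = Y$0$0" and "b = Y$0$1" and "c = Y$1$0" and "d = Y$1$1"
  have "\<bar>Re a - Re d\<bar> \<le> \<bar>cmod a + cmod d\<bar>"
    using abs_Re_le_cmod[of a] abs_Re_le_cmod[of d] by linarith
  then have "(Re a - Re d)\<^sup>2 \<le> (cmod a + cmod d)\<^sup>2"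
    by (simp only: abs_le_square_iff)
  moreover have "cmod a * cmod d \<le> cmod (a * d - b * c) + cmod b * cmod c"
    using norm_triangle_ineq[of "a * d - b * c" "b * c"] by (simp add: norm_mult)
  moreover have "2 * (cmod b * cmod c) \<le> (cmod b)\<^sup>2 + (cmod c)\<^sup>2"
    using sum_squares_bound[of "cmod b" "cmod c"] by (simp add: algebra_simps)
  ultimately have "(Re a - Re d)\<^sup>2
      \<le> (cmod a)\<^sup>2 + (cmod b)\<^sup>2 + (cmod c)\<^sup>2 + (cmod d)\<^sup>2 + 2 * cmod (a * d - b * c)"
    unfolding power2_sum by linarith
  then have "Re a - Re d
      \<le> sqrt ((cmod a)\<^sup>2 + (cmod b)\<^sup>2 + (cmod c)\<^sup>2 + (cmod d)\<^sup>2 + 2 * cmod (a * d - b * c))"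
    by (rule real_le_rsqrt)
  then show ?thesis
    unfolding trace_norm_qubit det_2_0_1 sum_UNIV_2 a_def b_def c_def d_def by (simp add: add_ac)
qed

lemma trace_dist_gibbs_battery_ket1bra1:
  assumes "1 \<le> M"
  shows "trace_dist (gibbs_battery M) ket1bra1 = 1 - 1 / M"
proof -
  define m where "m = 1 - 1 / M"
  have "0 \<le> m"
    using assms by (simp add: m_def)
  have entries: "(gibbs_battery M - ket1bra1)$0$0 = of_real m" "(gibbs_battery M - ket1bra1)$0$1 = 0"
    "(gibbs_battery M - ket1bra1)$1$0 = 0" "(gibbs_battery M - ket1bra1)$1$1 = - of_real m"
    by (simp_all add: gibbs_battery_def ket1bra1_def m_def)
  have "trace_norm (gibbs_battery M - ket1bra1) = sqrt ((2 * m)\<^sup>2)"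
    unfolding trace_norm_qubit det_2_0_1 sum_UNIV_2 entries
    by (simp add: norm_mult power2_eq_square)
  with \<open>0 \<le> m\<close> show ?thesis
    unfolding trace_dist_def m_def by simp
qed

lemma clinear_op_imp_linear:
  fixes L :: "'n::finite op \<Rightarrow> 'm::finite op"
  assumes "clinear_op L"
  shows "linear L"
proof (rule linearI)
  fix X Y :: "'n op" and c :: real
  show "L (X + Y) = L X + L Y"
    using assms unfolding clinear_op_def by blast
  have "c *\<^sub>R Z = cscale (of_real c) Z" for Z :: "'k::finite op"
    by (simp add: vec_eq_iff cscale_def) (simp add: scaleR_conv_of_real)
  then show "L (c *\<^sub>R X) = c *\<^sub>R L X"
    using assms unfolding clinear_op_def by metis
qed

lemma clinear_op_replacement: "clinear_op (\<lambda>X :: 'n::finite op. cscale (trace X) G)"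
  unfolding clinear_op_def
  by (simp add: vec_eq_iff cscale_def trace_def sum.distrib sum_distrib_left algebra_simps)

definition pop_diff :: "2 op \<Rightarrow> real" where
  "pop_diff Y = Re (Y$0$0) - Re (Y$1$1)"

lemma linear_pop_diff: "linear pop_diff"
  by (rule linearI) (simp_all add: pop_diff_def algebra_simps)

lemma pop_diff_gibbs_battery: "pop_diff (gibbs_battery M) = 1 - 2 / M"
  by (simp add: pop_diff_def gibbs_battery_def)

lemma pop_diff_le_if_trace_dist_ket1bra1:
  assumes "trace_dist Y ket1bra1 \<le> eps"
  shows "pop_diff Y \<le> 2 * eps - 1"
proof -
  have "pop_diff Y + 1 = Re ((Y - ket1bra1)$0$0) - Re ((Y - ket1bra1)$1$1)"
    by (simp add: pop_diff_def ket1bra1_def)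
  also have "\<dots> \<le> trace_norm (Y - ket1bra1)"
    by (rule trace_norm_ge_diag_diff)
  also have "\<dots> \<le> 2 * eps"
    using assms unfolding trace_dist_def by simp
  finally show ?thesis by simp
qed

lemma affine_linear_level_set:
  assumes "linear F"
  shows "affine {x. F x = (d :: real)}"
  using assms unfolding affine_def by (simp add: linear_add linear_scale flip: distrib_right)

lemma level_le_if_convex_hull_meets_affine_hull:
  fixes F :: "'a::real_vector \<Rightarrow> real"
  assumes "linear F"
    and "\<And>x. x \<in> P \<Longrightarrow> F x \<le> c" and "\<And>x. x \<in> E \<Longrightarrow> F x = d"
    and "convex hull P \<inter> affine hull E \<noteq> {}"
  shows "d \<le> c"
proof -
  obtain x where x: "x \<in> convex hull P" "x \<in> affine hull E"
    using assms(4) by blast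
  have "convex hull P \<subseteq> F -` {..c}"
    using assms(2) by (intro hull_minimal convex_linear_vimage[OF assms(1)]) auto
  moreover have "affine hull E \<subseteq> {x. F x = d}"
    using assms(3) by (intro hull_minimal affine_linear_level_set[OF assms(1)]) auto
  ultimately show ?thesis
    using x by auto
qed

lemma converts_imp_eps_ge:
  assumes "converts P E eps M L" and "convex hull P \<inter> affine hull E \<noteq> {}"
  shows "1 - 1 / M \<le> eps"
proof -
  have L: "clinear_op L" "\<forall>\<rho>\<in>P. trace_dist (L \<rho>) ket1bra1 \<le> eps"
    "\<forall>\<tau>\<in>E. L \<tau> = gibbs_battery M"
    using assms(1) unfolding converts_def by auto
  have "linear (\<lambda>X. pop_diff (L X))"
    using linear_compose[OF clinear_op_imp_linear[OF L(1)] linear_pop_diff] by (simp add: o_def)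
  moreover have "pop_diff (L \<rho>) \<le> 2 * eps - 1" if "\<rho> \<in> P" for \<rho>
    using L(2) that by (simp add: pop_diff_le_if_trace_dist_ket1bra1)
  moreover have "pop_diff (L \<tau>) = 1 - 2 / M" if "\<tau> \<in> E" for \<tau>
    using L(3) that by (simp add: pop_diff_gibbs_battery)
  ultimately have "1 - 2 / M \<le> 2 * eps - 1"
    using assms(2) by (rule level_le_if_convex_hull_meets_affine_hull)
  then show ?thesis by simp
qed

lemma converts_replacement:
  assumes "1 \<le> M" and "1 - 1 / M \<le> eps" and "P \<subseteq> density" and "E \<subseteq> density"
  shows "converts P E eps M (\<lambda>X. cscale (trace X) (gibbs_battery M))"
proof -
  have "cscale (trace X) G = G" if "X \<in> P \<union> E" for X and G :: "2 op"
    using that assms(3,4) by (auto simp: density_def cscale_def vec_eq_iff)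
  then show ?thesis
    unfolding converts_def
    using clinear_op_replacement trace_dist_gibbs_battery_ket1bra1[OF assms(1)] assms(2) by auto
qed

definition swap_unitary :: "complex^('n::finite \<times> 'b::finite)^('b \<times> 'n)" where
  "swap_unitary = (\<chi> x p. if p = prod.swap x then 1 else 0)"

lemma adj_swap_unitary: "adj swap_unitary = (\<chi> p x. if x = prod.swap p then 1 else 0)"
  by (auto simp: adj_def swap_unitary_def vec_eq_iff)

lemma swap_eq_iff: "prod.swap x = y \<longleftrightarrow> x = prod.swap y"
  by auto

lemma pair_eq_swap_iff: "(a, b) = prod.swap x \<longleftrightarrow> x = (b, a)"
  by (cases x) auto

lemma swap_unitary_mult: "swap_unitary ** A = (\<chi> x y. A $ prod.swap x $ y)"
  by (simp add: matrix_matrix_mult_def swap_unitary_def vec_eq_iff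
      if_distrib if_distribR cong: if_cong)

lemma mult_swap_unitary: "A ** swap_unitary = (\<chi> x p. A $ x $ prod.swap p)"
  by (simp add: matrix_matrix_mult_def swap_unitary_def vec_eq_iff
      if_distrib if_distribR pair_eq_swap_iff cong: if_cong)

lemma adj_swap_unitary_mult: "adj swap_unitary ** A = (\<chi> p y. A $ prod.swap p $ y)"
  by (simp add: matrix_matrix_mult_def adj_swap_unitary vec_eq_iff
      if_distrib if_distribR swap_eq_iff cong: if_cong)

lemma mult_adj_swap_unitary: "A ** adj swap_unitary = (\<chi> p y. A $ p $ prod.swap y)"
  by (simp add: matrix_matrix_mult_def adj_swap_unitary vec_eq_iff
      if_distrib if_distribR pair_eq_swap_iff cong: if_cong)

lemma unitary_swap_unitary:
  "unitary_mat (swap_unitary :: complex^('n::finite \<times> 'b::finite)^('b \<times> 'n))"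
  unfolding unitary_mat_def swap_unitary_mult adj_swap_unitary_mult
  unfolding adj_swap_unitary by (auto simp: swap_unitary_def mat_def vec_eq_iff)

(* The swap intertwines HS (x) 1 + 1 (x) HB with HB (x) 1 + 1 (x) HS, so it conserves energy
   when the ancilla carries HB and the discarded rest carries HS. *)
lemma thermal_operation_replacement:
  fixes HS :: "'n::finite op" and HB G :: "'b::finite op"
  assumes "hermitian HS" and "is_gibbs beta HB G"
  shows "thermal_operation TYPE('b) TYPE('n) beta HS HB (\<lambda>X. cscale (trace X) G)"
proof -
  have "hermitian HB"
    using assms(2) unfolding is_gibbs_def by blast
  moreover have "(swap_unitary :: complex^('n \<times> 'b)^('b \<times> 'n))
        ** (kron HS (mat 1) + kron (mat 1) HB) = (kron HB (mat 1) + kron (mat 1) HS) ** swap_unitary"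
    unfolding swap_unitary_mult mult_swap_unitary
    by (auto simp: vec_eq_iff kron_def mat_def algebra_simps)
  moreover have "cscale (trace X) G = ptrace2 (swap_unitary ** kron X G ** adj swap_unitary)"
    for X :: "'n op"
    unfolding swap_unitary_mult mult_adj_swap_unitary
    by (simp add: vec_eq_iff ptrace2_def cscale_def kron_def trace_def sum_distrib_right)
  ultimately show ?thesis
    unfolding thermal_operation_def using assms unitary_swap_unitary by blast
qed

theorem corollary2:
  fixes P E :: "('n::finite) op set" and eps :: real
  assumes eps: "0 \<le> eps" "eps < 1"
    and PE: "P \<subseteq> density" "E \<subseteq> density"
    and inter: "convex hull P \<inter> affine hull E \<noteq> {}"
  shows "(\<forall>M>1. (\<exists>L. converts P E eps M L) \<longleftrightarrow> eps \<ge> 1 - 1 / M)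
       \<and> ((\<exists>M>1. \<exists>L. converts P E eps M L) \<longrightarrow>
            1 / (1 - eps) > 1
          \<and> converts P E eps (1 / (1 - eps)) (\<lambda>X. cscale (trace X) (gibbs_battery (1 / (1 - eps))))
          \<and> (\<forall>M>1. (\<exists>L. converts P E eps M L) \<longrightarrow> M \<le> 1 / (1 - eps))
          \<and> (\<forall>beta>0. \<forall>(HS::'n op) (HB::2 op). hermitian HS \<and> is_gibbs beta HB (gibbs_battery (1 / (1 - eps)))
               \<longrightarrow> thermal_operation TYPE(2) TYPE('n) beta HS HB
                     (\<lambda>X. cscale (trace X) (gibbs_battery (1 / (1 - eps))))))"
proof -
  have threshold: "(\<exists>L. converts P E eps M L) \<longleftrightarrow> 1 - 1 / M \<le> eps" if "1 < M" for M
    using converts_imp_eps_ge[OF _ inter] converts_replacement[of M eps P E] that PE by auto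
  show ?thesis
  proof (intro conjI allI impI)
    fix M :: real
    assume "1 < M"
    with threshold show "(\<exists>L. converts P E eps M L) \<longleftrightarrow> eps \<ge> 1 - 1 / M"
      by simp
  next
    assume "\<exists>M>1. \<exists>L. converts P E eps M L"
    with threshold obtain M where "1 < M" and "1 - 1 / M \<le> eps"
      by blast
    moreover from \<open>1 < M\<close> have "1 / M < 1"
      by simp
    ultimately have "0 < eps"
      by linarith
    with eps show "1 / (1 - eps) > 1"
      by simp
  next
    show "converts P E eps (1 / (1 - eps)) (\<lambda>X. cscale (trace X) (gibbs_battery (1 / (1 - eps))))"
      using eps PE by (intro converts_replacement) auto
  next
    fix M :: real
    assume "1 < M" and "\<exists>L. converts P E eps M L"
    with threshold have "1 - 1 / M \<le> eps"
      by blast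
    with eps \<open>1 < M\<close> show "M \<le> 1 / (1 - eps)"
      by (simp add: field_simps)
  next
    fix beta :: real and HS :: "'n op" and HB :: "2 op"
    assume "hermitian HS \<and> is_gibbs beta HB (gibbs_battery (1 / (1 - eps)))"
    then show "thermal_operation TYPE(2) TYPE('n) beta HS HB
        (\<lambda>X. cscale (trace X) (gibbs_battery (1 / (1 - eps))))"
      by (blast intro: thermal_operation_replacement)
  qed
qed

end
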